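(* If $Z=\{x_{A_1,i_1},x_{A_2,i_2},\dots,x_{A_n,i_n}\}$ is a sufficient subset of $Q_n$, then $i_1,i_2,\dots,i_n$ are pairwise distinct.
   Context: Fix a field $k$. $Q_n$ is the associative unital $k$-algebra with generators $x_{A,i}$ ($A\subseteq\{1,\dots,n\}$, $i\notin A$), called pseudo-roots, subject to $x_{A\cup\{i\},j}+x_{A,i}=x_{A\cup\{j\},i}+x_{A,j}$ and $x_{A\cup\{i\},j}\,x_{A,i}=x_{A\cup\{j\},i}\,x_{A,j}$ for all $A$ and $i\ne j$, $i,j\notin A$. With $t$ central, $\mathcal P(t)=(t-x_{A_n,i_n})\cdots(t-x_{A_1,i_1})$ for an ordering $(i_1,\dots,i_n)$ of $\{1,\dots,n\}$ and $A_k=\{i_1,\dots,i_{k-1}\}$ (independent of the ordering). A set $Y$ of pseudo-roots is defining if $\mathcal P(t)=(t-y_n)\cdots(t-y_1)$ with all $y_k\in Y$. The pseudo-root $x_{A,i}$ corresponds to an edge with tail $A\cup\{i\}$ and head $A$. For distinct pseudo-roots $x_{A,i},x_{B,j}$ with $A=B$, $\xi$ is obtained from the ordered pair by the $u$-operation if $(x_{A,i}-x_{B,j})x_{A,i}=\xi(x_{A,i}-x_{B,j})$; for distinct pseudo-roots with $A\cup\{i\}=B\cup\{j\}$, $\eta$ is obtained by the $d$-operation if $(x_{A,i}-x_{B,j})\eta=x_{A,i}(x_{A,i}-x_{B,j})$. The $du$-envelope of a set $Z$ of pseudo-roots is the set of pseudo-roots obtained from $Z$ by successive $d$- and $u$-operations;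 $Z$ is sufficient if its $du$-envelope contains a defining set. *)

theory Defs
  imports Main
begin

text \<open>A generator (pseudo-root symbol) x_{A,i} is represented by the pair (A,i).
  Elements of the free algebra k<gen> are functions from words to k
  (coefficient of each word); all elements we build have finite support.\<close>

type_synonym gen = "nat set \<times> nat"
type_synonym 'k fa = "gen list \<Rightarrow> 'k"

definition fa_zero :: "'k::field fa" where
  "fa_zero = (\<lambda>_. 0)"

definition fa_mon :: "gen list \<Rightarrow> 'k::field fa" where
  "fa_mon w = (\<lambda>v. if v = w then 1 else 0)"

definition fa_one :: "'k::field fa" where
  "fa_one = fa_mon []"

definition fa_gen :: "gen \<Rightarrow> 'k::field fa" where
  "fa_gen g = fa_mon [g]"

definition fa_add :: "'k::field fa \<Rightarrow> 'k fa \<Rightarrow> 'k fa" where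
  "fa_add p q = (\<lambda>w. p w + q w)"

definition fa_sub :: "'k::field fa \<Rightarrow> 'k fa \<Rightarrow> 'k fa" where
  "fa_sub p q = (\<lambda>w. p w - q w)"

definition fa_smult :: "'k::field \<Rightarrow> 'k fa \<Rightarrow> 'k fa" where
  "fa_smult c p = (\<lambda>w. c * p w)"

definition fa_mult :: "'k::field fa \<Rightarrow> 'k fa \<Rightarrow> 'k fa" where
  "fa_mult p q = (\<lambda>w. \<Sum>ab\<in>{(a, b). a @ b = w}. p (fst ab) * q (snd ab))"

definition pseudo_roots :: "nat \<Rightarrow> gen set" where
  "pseudo_roots n = {(A, i). A \<subseteq> {1..n} \<and> i \<in> {1..n} \<and> i \<notin> A}"

definition qrels :: "nat \<Rightarrow> 'k::field fa set" where
  "qrels n = {r. \<exists>A i j. A \<subseteq> {1..n} \<and> i \<in> {1..n} \<and> j \<in> {1..n} \<and> i \<notin> A \<and> j \<notin> A \<and> i \<noteq> j \<and>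
     (r = fa_sub (fa_add (fa_gen (insert i A, j)) (fa_gen (A, i)))
                 (fa_add (fa_gen (insert j A, i)) (fa_gen (A, j)))
      \<or> r = fa_sub (fa_mult (fa_gen (insert i A, j)) (fa_gen (A, i)))
                 (fa_mult (fa_gen (insert j A, i)) (fa_gen (A, j))))}"

text \<open>The two-sided ideal generated by the relations: k-linear combinations of
  u * r * v with u, v words and r a relation.\<close>
inductive_set qideal :: "nat \<Rightarrow> 'k::field fa set" for n where
  qideal_zero: "fa_zero \<in> qideal n"
| qideal_step: "r \<in> qrels n \<Longrightarrow> p \<in> qideal n \<Longrightarrow>
     fa_add (fa_smult c (fa_mult (fa_mult (fa_mon u) r) (fa_mon v))) p \<in> qideal n"

definition qeq :: "nat \<Rightarrow> 'k::field fa \<Rightarrow> 'k fa \<Rightarrow> bool" where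
  "qeq n p q \<longleftrightarrow> fa_sub p q \<in> qideal n"

text \<open>tprod [y_m, ..., y_1] k is the coefficient of t^k in (t - y_m) ... (t - y_1)
  (the leftmost list element is the leftmost factor).\<close>
fun tprod :: "gen list \<Rightarrow> nat \<Rightarrow> 'k::field fa" where
  "tprod [] k = (if k = 0 then fa_one else fa_zero)"
| "tprod (g # gs) k =
     fa_sub (if k = 0 then fa_zero else tprod gs (k - 1)) (fa_mult (fa_gen g) (tprod gs k))"

text \<open>The ordering (1,...,n): factors (t - x_{A_n,n}) ... (t - x_{A_1,1}), A_k = {1..k-1}.\<close>
definition std_roots :: "nat \<Rightarrow> gen list" where
  "std_roots n = map (\<lambda>k. ({1..<k}, k)) (rev [1..<n+1])"

definition defining :: "'k::field itself \<Rightarrow> nat \<Rightarrow> gen set \<Rightarrow> bool" where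
  "defining T n Y \<longleftrightarrow> Y \<subseteq> pseudo_roots n \<and>
     (\<exists>ys. length ys = n \<and> set ys \<subseteq> Y \<and>
        (\<forall>k. qeq n (tprod ys k :: 'k fa) (tprod (std_roots n) k)))"

definition u_op :: "'k::field itself \<Rightarrow> nat \<Rightarrow> gen \<Rightarrow> gen \<Rightarrow> gen \<Rightarrow> bool" where
  "u_op T n p q xi \<longleftrightarrow> p \<in> pseudo_roots n \<and> q \<in> pseudo_roots n \<and> xi \<in> pseudo_roots n \<and>
     p \<noteq> q \<and> fst p = fst q \<and>
     qeq n (fa_mult (fa_sub (fa_gen p) (fa_gen q)) (fa_gen p) :: 'k fa)
           (fa_mult (fa_gen xi) (fa_sub (fa_gen p) (fa_gen q)))"

definition d_op :: "'k::field itself \<Rightarrow> nat \<Rightarrow> gen \<Rightarrow> gen \<Rightarrow> gen \<Rightarrow> bool" where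
  "d_op T n p q eta \<longleftrightarrow> p \<in> pseudo_roots n \<and> q \<in> pseudo_roots n \<and> eta \<in> pseudo_roots n \<and>
     p \<noteq> q \<and> insert (snd p) (fst p) = insert (snd q) (fst q) \<and>
     qeq n (fa_mult (fa_sub (fa_gen p) (fa_gen q)) (fa_gen eta) :: 'k fa)
           (fa_mult (fa_gen p) (fa_sub (fa_gen p) (fa_gen q)))"

inductive_set du_envelope :: "'k::field itself \<Rightarrow> nat \<Rightarrow> gen set \<Rightarrow> gen set"
  for T n Z where
  env_base: "z \<in> Z \<Longrightarrow> z \<in> du_envelope T n Z"
| env_u: "p \<in> du_envelope T n Z \<Longrightarrow> q \<in> du_envelope T n Z \<Longrightarrow> u_op T n p q xi \<Longrightarrow>
     xi \<in> du_envelope T n Z"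
| env_d: "p \<in> du_envelope T n Z \<Longrightarrow> q \<in> du_envelope T n Z \<Longrightarrow> d_op T n p q eta \<Longrightarrow>
     eta \<in> du_envelope T n Z"

definition sufficient :: "'k::field itself \<Rightarrow> nat \<Rightarrow> gen set \<Rightarrow> bool" where
  "sufficient T n Z \<longleftrightarrow> (\<exists>Y \<subseteq> du_envelope T n Z. defining T n Y)"

end

theory Submission
  imports Defs "HOL-Computational_Algebra.Polynomial"
begin

text \<open>Sending each pseudo-root x_{A,i} to the monomial X^i of the commutative ring k[X] kills
  the defining relations of Q_n, since both sides of each relation involve the same two indices.
  In the image, the equations of the u- and d-operations on x_{A,i} and x_{B,j} become
  (X^i - X^j) X^l = X^i (X^i - X^j) with i \<noteq> j, which forces l = i: the operations never create
  a new index, so the indices occurring in the du-envelope of Z are those of Z. On the other hand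
  a defining set maps to a factorisation of (t - X^n) ... (t - X^1) into linear factors t - X^i
  over the domain k[X], so its indices cover {1..n}. Hence the n elements of Z carry n distinct
  indices.\<close>

definition fa_support :: "'k::field fa \<Rightarrow> gen list set" where
  "fa_support p = {w. p w \<noteq> 0}"

definition fa_finite :: "'k::field fa \<Rightarrow> bool" where
  "fa_finite p \<longleftrightarrow> finite (fa_support p)"

definition word_eval :: "(gen \<Rightarrow> 'k::field poly) \<Rightarrow> gen list \<Rightarrow> 'k poly" where
  "word_eval \<phi> w = prod_list (map \<phi> w)"

text \<open>The algebra map k<gen> \<rightarrow> k[X] extending \<phi>; on elements of infinite support the sum
  is junk (0), hence the hypotheses \<open>fa_finite\<close> in the homomorphism laws below.\<close>

definition fa_eval :: "(gen \<Rightarrow> 'k::field poly) \<Rightarrow> 'k fa \<Rightarrow> 'k poly" where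
  "fa_eval \<phi> p = (\<Sum>w\<in>fa_support p. smult (p w) (word_eval \<phi> w))"

lemma fa_eval_eq_sum:
  assumes "finite S" "fa_support p \<subseteq> S"
  shows "fa_eval \<phi> p = (\<Sum>w\<in>S. smult (p w) (word_eval \<phi> w))"
  unfolding fa_eval_def
  by (rule sum.mono_neutral_left) (use assms in \<open>auto simp: fa_support_def\<close>)

lemma smult_sum_right: "smult c (sum f S) = (\<Sum>i\<in>S. smult c (f i))"
  by (induct S rule: infinite_finite_induct) (auto simp: smult_add_right)

lemma word_eval_append: "word_eval \<phi> (u @ v) = word_eval \<phi> u * word_eval \<phi> v"
  by (simp add: word_eval_def)

lemma finite_split_append: "finite {(u, v). u @ v = w}"
proof -
  have "{(u, v). u @ v = w} \<subseteq> (\<lambda>k. (take k w, drop k w)) ` {..length w}"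
  proof
    fix x assume "x \<in> {(u, v). u @ v = w}"
    then obtain u v where "x = (u, v)" "u @ v = w" by auto
    then show "x \<in> (\<lambda>k. (take k w, drop k w)) ` {..length w}"
      by (intro image_eqI[of _ _ "length u"]) auto
  qed
  then show ?thesis by (rule finite_subset) simp
qed

lemma fa_support_mon: "fa_support (fa_mon w) = {w}"
  by (auto simp: fa_support_def fa_mon_def)

lemma fa_support_mult:
  "fa_support (fa_mult p q) \<subseteq> (\<lambda>(u, v). u @ v) ` (fa_support p \<times> fa_support q)"
proof
  fix w assume "w \<in> fa_support (fa_mult p q)"
  then have "(\<Sum>uv\<in>{(u, v). u @ v = w}. p (fst uv) * q (snd uv)) \<noteq> 0"
    by (simp add: fa_support_def fa_mult_def)
  then obtain uv where "uv \<in> {(u, v). u @ v = w}" "p (fst uv) * q (snd uv) \<noteq> 0"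
    by (meson sum.not_neutral_contains_not_neutral)
  then show "w \<in> (\<lambda>(u, v). u @ v) ` (fa_support p \<times> fa_support q)"
    by (intro image_eqI[of _ _ uv]) (auto simp: fa_support_def)
qed

lemma fa_finite_zero [simp]: "fa_finite fa_zero"
  and fa_finite_mon [simp]: "fa_finite (fa_mon w)"
  and fa_finite_one [simp]: "fa_finite fa_one"
  and fa_finite_gen [simp]: "fa_finite (fa_gen g)"
  by (auto simp: fa_finite_def fa_support_def fa_zero_def fa_one_def fa_gen_def fa_mon_def)

lemma fa_finite_add [simp]: "fa_finite p \<Longrightarrow> fa_finite q \<Longrightarrow> fa_finite (fa_add p q)"
  and fa_finite_sub [simp]: "fa_finite p \<Longrightarrow> fa_finite q \<Longrightarrow> fa_finite (fa_sub p q)"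
  and fa_finite_smult [simp]: "fa_finite p \<Longrightarrow> fa_finite (fa_smult c p)"
  unfolding fa_finite_def
  by (auto intro: rev_finite_subset[of "fa_support p \<union> fa_support q"]
      rev_finite_subset[of "fa_support p"] simp: fa_support_def fa_add_def fa_sub_def fa_smult_def)

lemma fa_finite_mult [simp]: "fa_finite p \<Longrightarrow> fa_finite q \<Longrightarrow> fa_finite (fa_mult p q)"
  unfolding fa_finite_def by (rule finite_subset[OF fa_support_mult]) simp

lemma fa_eval_zero [simp]: "fa_eval \<phi> fa_zero = 0"
  by (simp add: fa_eval_def fa_support_def fa_zero_def)

lemma fa_eval_mon [simp]: "fa_eval \<phi> (fa_mon w) = word_eval \<phi> w"
  unfolding fa_eval_def fa_support_mon by (simp add: fa_mon_def)

lemma fa_eval_one [simp]: "fa_eval \<phi> fa_one = 1"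
  and fa_eval_gen [simp]: "fa_eval \<phi> (fa_gen g) = \<phi> g"
  by (simp_all add: fa_one_def fa_gen_def word_eval_def)

lemma fa_eval_add [simp]:
  assumes "fa_finite p" "fa_finite q"
  shows "fa_eval \<phi> (fa_add p q) = fa_eval \<phi> p + fa_eval \<phi> q"
proof -
  let ?S = "fa_support p \<union> fa_support q"
  have "finite ?S" using assms by (simp add: fa_finite_def)
  then show ?thesis
    by (subst (1 2 3) fa_eval_eq_sum[where S = ?S])
      (auto simp: fa_support_def fa_add_def smult_add_left sum.distrib)
qed

lemma fa_eval_sub [simp]:
  assumes "fa_finite p" "fa_finite q"
  shows "fa_eval \<phi> (fa_sub p q) = fa_eval \<phi> p - fa_eval \<phi> q"
proof -
  let ?S = "fa_support p \<union> fa_support q"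
  have "finite ?S" using assms by (simp add: fa_finite_def)
  then show ?thesis
    by (subst (1 2 3) fa_eval_eq_sum[where S = ?S])
      (auto simp: fa_support_def fa_sub_def smult_diff_left sum_subtractf)
qed

lemma fa_eval_smult [simp]:
  assumes "fa_finite p"
  shows "fa_eval \<phi> (fa_smult c p) = smult c (fa_eval \<phi> p)"
proof -
  have "finite (fa_support p)" using assms by (simp add: fa_finite_def)
  then show ?thesis
    by (subst fa_eval_eq_sum[where S = "fa_support p"])
      (auto simp: fa_support_def fa_smult_def fa_eval_def smult_sum_right)
qed

lemma fa_eval_mult [simp]:
  assumes "fa_finite p" "fa_finite q"
  shows "fa_eval \<phi> (fa_mult p q) = fa_eval \<phi> p * fa_eval \<phi> q"
proof -
  let ?P = "fa_support p" and ?Q = "fa_support q"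
  let ?W = "(\<lambda>(u, v). u @ v) ` (?P \<times> ?Q)"
  define h where "h uv = smult (p (fst uv) * q (snd uv)) (word_eval \<phi> (fst uv @ snd uv))" for uv
  have fin: "finite ?P" "finite ?Q" using assms by (auto simp: fa_finite_def)
  have "fa_eval \<phi> p * fa_eval \<phi> q
      = (\<Sum>u\<in>?P. \<Sum>v\<in>?Q. smult (p u) (word_eval \<phi> u) * smult (q v) (word_eval \<phi> v))"
    by (simp add: fa_eval_def sum_product)
  also have "\<dots> = (\<Sum>uv\<in>?P \<times> ?Q. h uv)"
    by (simp add: sum.cartesian_product h_def word_eval_append mult.commute mult.left_commute
        split_def)
  also have "\<dots> = (\<Sum>w\<in>?W. \<Sum>uv\<in>{uv \<in> ?P \<times> ?Q. fst uv @ snd uv = w}. h uv)"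
    by (rule sum.group[symmetric]) (use fin in auto)
  also have "\<dots> = (\<Sum>w\<in>?W. smult (fa_mult p q w) (word_eval \<phi> w))"
  proof (rule sum.cong[OF refl])
    fix w
    have "(\<Sum>uv\<in>{uv \<in> ?P \<times> ?Q. fst uv @ snd uv = w}. h uv) = (\<Sum>uv\<in>{(u, v). u @ v = w}. h uv)"
      by (rule sum.mono_neutral_left) (auto simp: finite_split_append h_def fa_support_def)
    also have "\<dots> = smult (fa_mult p q w) (word_eval \<phi> w)"
      by (auto simp: fa_mult_def smult_sum h_def intro: sum.cong)
    finally show "(\<Sum>uv\<in>{uv \<in> ?P \<times> ?Q. fst uv @ snd uv = w}. h uv)
        = smult (fa_mult p q w) (word_eval \<phi> w)" .
  qed
  also have "\<dots> = fa_eval \<phi> (fa_mult p q)"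
    using fin by (simp add: fa_eval_eq_sum[OF _ fa_support_mult])
  finally show ?thesis by simp
qed

lemma fa_finite_tprod [simp]: "fa_finite (tprod gs k)"
  by (induction gs arbitrary: k) simp_all

definition linear_factors :: "(gen \<Rightarrow> 'k::field poly) \<Rightarrow> gen list \<Rightarrow> 'k poly poly" where
  "linear_factors \<phi> gs = (\<Prod>g\<leftarrow>gs. [:- \<phi> g, 1:])"

lemma fa_eval_tprod: "fa_eval \<phi> (tprod gs k) = coeff (linear_factors \<phi> gs) k"
  by (induction gs arbitrary: k) (simp_all add: linear_factors_def coeff_1 coeff_pCons')

definition index_monom :: "gen \<Rightarrow> 'k::field poly" where
  "index_monom g = monom 1 (snd g)"

lemma fa_eval_index_monom_qrels:
  "r \<in> qrels n \<Longrightarrow> fa_finite r \<and> fa_eval index_monom (r :: 'k::field fa) = 0"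
  by (auto simp: qrels_def index_monom_def mult.commute)

lemma fa_eval_index_monom_qideal:
  "p \<in> qideal n \<Longrightarrow> fa_finite p \<and> fa_eval index_monom (p :: 'k::field fa) = 0"
  by (induction rule: qideal.induct) (simp_all add: fa_eval_index_monom_qrels)

lemma qeq_imp_fa_eval_index_monom_eq:
  assumes "qeq n p q" "fa_finite p" "fa_finite q"
  shows "fa_eval index_monom (p :: 'k::field fa) = fa_eval index_monom q"
  using assms fa_eval_index_monom_qideal[of "fa_sub p q" n] by (simp add: qeq_def)

lemma monom_diff_commute_cancel:
  assumes "a \<noteq> b"
    and "(monom 1 a - monom 1 b) * monom 1 c = monom 1 a * (monom 1 a - monom 1 b :: 'k::idom poly)"
  shows "c = a"
proof -
  have "(monom 1 a - monom 1 b) * (monom 1 c - monom 1 a) = (0 :: 'k poly)"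
    using assms(2) by (simp add: algebra_simps)
  moreover have "monom 1 a \<noteq> (monom 1 b :: 'k poly)"
    using assms(1) by (simp add: monom_eq_iff')
  ultimately show ?thesis by (simp add: monom_eq_iff')
qed

lemma u_op_snd:
  assumes "u_op TYPE('k::field) n p q \<xi>"
  shows "snd \<xi> = snd p"
proof (rule monom_diff_commute_cancel)
  show "snd p \<noteq> snd q" using assms by (auto simp: u_op_def prod_eq_iff)
  have "fa_eval index_monom (fa_mult (fa_sub (fa_gen p) (fa_gen q)) (fa_gen p) :: 'k fa)
      = fa_eval index_monom (fa_mult (fa_gen \<xi>) (fa_sub (fa_gen p) (fa_gen q)))"
    using assms unfolding u_op_def by (intro qeq_imp_fa_eval_index_monom_eq) auto
  then show "(monom 1 (snd p) - monom 1 (snd q)) * monom 1 (snd \<xi>)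
      = monom 1 (snd p) * (monom 1 (snd p) - monom 1 (snd q) :: 'k poly)"
    by (auto simp: index_monom_def mult.commute)
qed

lemma d_op_snd:
  assumes "d_op TYPE('k::field) n p q \<eta>"
  shows "snd \<eta> = snd p"
proof (rule monom_diff_commute_cancel)
  have "snd p \<notin> fst p" "snd q \<notin> fst q" "insert (snd p) (fst p) = insert (snd q) (fst q)" "p \<noteq> q"
    using assms by (auto simp: d_op_def pseudo_roots_def)
  then show "snd p \<noteq> snd q"
    by (metis Diff_insert_absorb prod_eqI)
  have "fa_eval index_monom (fa_mult (fa_sub (fa_gen p) (fa_gen q)) (fa_gen \<eta>) :: 'k fa)
      = fa_eval index_monom (fa_mult (fa_gen p) (fa_sub (fa_gen p) (fa_gen q)))"
    using assms unfolding d_op_def by (intro qeq_imp_fa_eval_index_monom_eq) auto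
  then show "(monom 1 (snd p) - monom 1 (snd q)) * monom 1 (snd \<eta>)
      = monom 1 (snd p) * (monom 1 (snd p) - monom 1 (snd q) :: 'k poly)"
    by (simp add: index_monom_def)
qed

lemma du_envelope_snd:
  "e \<in> du_envelope TYPE('k::field) n Z \<Longrightarrow> snd e \<in> snd ` Z"
proof (induction rule: du_envelope.induct)
  case (env_u p q \<xi>)
  then show ?case by (metis u_op_snd)
next
  case (env_d p q \<eta>)
  then show ?case by (metis d_op_snd)
qed simp

lemma defining_snd_covers:
  assumes "defining TYPE('k::field) n Y"
  shows "{1..n} \<subseteq> snd ` Y"
proof
  fix i assume i: "i \<in> {1..n}"
  obtain ys where ys: "set ys \<subseteq> Y"
    and eq: "\<And>k. qeq n (tprod ys k :: 'k fa) (tprod (std_roots n) k)"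
    using assms unfolding defining_def by blast
  have factors_eq: "linear_factors index_monom ys
      = (linear_factors index_monom (std_roots n) :: 'k poly poly)"
    using eq by (intro poly_eqI) (metis fa_eval_tprod qeq_imp_fa_eval_index_monom_eq fa_finite_tprod)
  have "({1..<i}, i) \<in> set (std_roots n)"
    using i by (auto simp: std_roots_def)
  then have "poly (linear_factors index_monom (std_roots n)) (monom 1 i :: 'k poly) = 0"
    by (auto simp: linear_factors_def poly_prod_list[simplified] prod_list_zero_iff index_monom_def
        intro!: image_eqI[of _ _ "({1..<i}, i)"])
  then have "poly (linear_factors index_monom ys) (monom 1 i :: 'k poly) = 0"
    by (simp add: factors_eq)
  then obtain g where "g \<in> set ys" "monom 1 i = (index_monom g :: 'k poly)"
    by (auto simp: linear_factors_def poly_prod_list[simplified] prod_list_zero_iff)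
  then show "i \<in> snd ` Y"
    using ys by (force simp: index_monom_def monom_eq_iff')
qed

lemma finite_pseudo_roots: "finite (pseudo_roots n)"
  by (rule finite_subset[of _ "Pow {1..n} \<times> {1..n}"]) (auto simp: pseudo_roots_def)

theorem theorem1p4p5:
  fixes n :: nat and Z :: "gen set"
  assumes "Z \<subseteq> pseudo_roots n"
    and "card Z = n"
    and "sufficient TYPE('k::field) n Z"
  shows "inj_on snd Z"
proof -
  obtain Y where Y: "Y \<subseteq> du_envelope TYPE('k) n Z" "defining TYPE('k) n Y"
    using assms(3) unfolding sufficient_def by blast
  have "{1..n} \<subseteq> snd ` Y" using defining_snd_covers[OF Y(2)] .
  also have "\<dots> \<subseteq> snd ` Z" using Y(1) du_envelope_snd by blast
  finally have covers: "{1..n} \<subseteq> snd ` Z" .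
  have fin: "finite Z" using assms(1) finite_pseudo_roots by (rule finite_subset)
  have "card Z \<le> card (snd ` Z)"
    using card_mono[OF finite_imageI[OF fin] covers] assms(2) by simp
  with card_image_le[OF fin] have "card (snd ` Z) = card Z"
    by (rule le_antisym)
  then show ?thesis
    using fin by (simp add: inj_on_iff_eq_card)
qed

end
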